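(* Consider the ADEPT-type cluster-randomized SMART with common cluster size $m$ and no covariates, analyzed as in the context. Fix $b_2\in\{1,-1\}$. Assume: (a) consistency of potential outcomes; (b) $E_{1,b_2}\big[(\mathbf Y_i-\beta_{(1,b_2)}1_m)(\mathbf Y_i-\beta_{(1,b_2)}1_m)^T\mid R_i=0\big]\preceq\mathrm{Cov}_{1,b_2}(\mathbf Y_i)$ in the Loewner order; (c) $\mathrm{Cov}_{1,b_2}(\mathbf Y_i)=\sigma^2_{1,b_2}\mathrm{Exch}_m(\rho_{1,b_2})$ and $\mathrm{Cov}_{-1,\cdot}(\mathbf Y_i)=\sigma^2_{-1,\cdot}\mathrm{Exch}_m(\rho_{-1,\cdot})$. Then $$\tau^2(1,b_2)\le\frac{2(2-p_1)\sigma^2_{1,b_2}[1+(m-1)\rho_{1,b_2}]}{m},\qquad \tau^2(-1,\cdot)=\frac{2\sigma^2_{-1,\cdot}[1+(m-1)\rho_{-1,\cdot}]}{m}.$$ Consequently, suppose $\rho_{1,b_2}=\rho_{-1,\cdot}=\rho$ and $\sigma^2_{1,b_2}\le\sigma^2_{-1,\cdot}$, and set $\sigma^2=(\sigma^2_{1,b_2}+\sigma^2_{-1,\cdot})/2$. Then for any $\delta>0$ and $\alpha,\beta\in(0,1)$, $$\frac{(z_\beta+z_{\alpha/2})^2\big(\tau^2(1,b_2)+\tau^2(-1,\cdot)\big)}{\delta^2\sigma^2}\le\frac{4(z_\beta+z_{\alpha/2})^2}{m\delta^2}\,\big(1+(m-1)\rho\big)\Big(1+\frac{1-p_1}{2}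\Big).$$
   Context: ADEPT-type cluster-randomized SMART. There are $N$ i.i.d. clusters, each with $m$ individuals and outcome vector $\mathbf Y_i\in\mathbb R^m$. - Stage 1: $A_{1i}\in\{1,-1\}$ is assigned with probability $1/2$ each. - A response indicator $R_i\in\{0,1\}$ is then observed, with $p_1=\Pr(R_i=1\mid A_{1i}=1)$. - Stage 2: only clusters with $A_{1i}=1$ and $R_i=0$ are re-randomized, to $A_{2i}\in\{1,-1\}$ with probability $1/2$ each. There are three embedded DTRs: $(1,1)$, $(1,-1)$ and $(-1,\cdot)$. - A cluster with $A_{1i}=-1$ is consistent with $(-1,\cdot)$. - A cluster with $A_{1i}=1,R_i=1$ is consistent with both $(1,1)$ and $(1,-1)$. - A cluster with $A_{1i}=1,R_i=0,A_{2i}=a_2$ is consistent with $(1,a_2)$. $I_i(a_1,a_2)$ is the corresponding consistency indicator. The known weights are $W_i=4$ if $A_{1i}=1,R_i=0$ and $W_i=2$ otherwise. $E_{a_1,a_2}$ and $\mathrm{Cov}_{a_1,a_2}$ refer to the potential-outcome distribution had all clusters followed the DTR. The mean model is the cell-mean parameterization $E_{a_1,a_2}(Y_{ij})=\beta_{(a_1,a_2)}$, with one parameter per embedded DTR. It is estimated by solving $$\sum_i\sum_{(a_1,a_2)}I_i(a_1,a_2)\,W_i\,D_{(a_1,a_2)}^TV^{-1}\big(\mathbf Y_i-\beta_{(a_1,a_2)}1_m\big)=0,$$ with $D_{(a_1,a_2)}=1_me_{(a_1,a_2)}^T$ and an exchangeable working covariance $V=s^2\mathrm{Exch}_m(r)$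 (positive definite). Here $\mathrm{Exch}_m(r)$ is the $m\times m$ matrix with unit diagonal and off-diagonal entries $r$, and $1_m$ is the all-ones vector. $\tau^2(a_1,a_2)$ is the $(a_1,a_2)$ diagonal entry of the sandwich matrix $J^{-1}AJ^{-1}$, where $J=E\sum I_iW_iD^TV^{-1}D$ and $A=E[U_iU_i^T]$, with $U_i$ the summand of the estimating equation at the true parameters. This is the asymptotic variance of $\sqrt N\hat\beta_{(a_1,a_2)}$. $z_\kappa$ is the upper $\kappa$ quantile of the standard normal distribution. *)

theory Defs
  imports "HOL-Probability.Probability"
begin

datatype dtr = DTR_1_1 | DTR_1_m1 | DTR_m1

lemma UNIV_dtr: "(UNIV :: dtr set) = {DTR_1_1, DTR_1_m1, DTR_m1}"
  using dtr.exhaust by auto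

instance dtr :: finite
  by standard (simp add: UNIV_dtr)

definition dtr1 :: "real \<Rightarrow> dtr" where
  "dtr1 b2 = (if b2 = 1 then DTR_1_1 else DTR_1_m1)"

text \<open>Consistency indicator I_i(a1,a2) (as a real 0/1).  A1, A2 take values in {1,-1};
  R is the stage-1 response indicator (True = responder).\<close>
definition consist :: "('w \<Rightarrow> real) \<Rightarrow> ('w \<Rightarrow> bool) \<Rightarrow> ('w \<Rightarrow> real) \<Rightarrow> dtr \<Rightarrow> 'w \<Rightarrow> real" where
  "consist A1 R A2 d w =
     (case d of
        DTR_1_1 \<Rightarrow> (if A1 w = 1 \<and> (R w \<or> A2 w = 1) then 1 else 0)
      | DTR_1_m1 \<Rightarrow> (if A1 w = 1 \<and> (R w \<or> A2 w = -1) then 1 else 0)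
      | DTR_m1 \<Rightarrow> (if A1 w = -1 then 1 else 0))"

definition weight :: "('w \<Rightarrow> real) \<Rightarrow> ('w \<Rightarrow> bool) \<Rightarrow> 'w \<Rightarrow> real" where
  "weight A1 R w = (if A1 w = 1 \<and> \<not> R w then 4 else 2)"

definition ones :: "real^'m" where
  "ones = (\<chi> j. 1)"

definition outer :: "real^'n \<Rightarrow> real^'m \<Rightarrow> real^'m^'n" where
  "outer u v = (\<chi> i j. u $ i * v $ j)"

definition exch :: "real \<Rightarrow> real^'m^'m" where
  "exch r = (\<chi> i j. if i = j then 1 else r)"

definition loewner_le :: "real^'m^'m \<Rightarrow> real^'m^'m \<Rightarrow> bool" where
  "loewner_le A B \<longleftrightarrow> (\<forall>x. x \<bullet> (A *v x) \<le> x \<bullet> (B *v x))"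

definition pos_def :: "real^'m^'m \<Rightarrow> bool" where
  "pos_def V \<longleftrightarrow> transpose V = V \<and> (\<forall>x. x \<noteq> 0 \<longrightarrow> 0 < x \<bullet> (V *v x))"

definition Dmat :: "dtr \<Rightarrow> real^dtr^'m" where
  "Dmat d = (\<chi> j k. if k = d then 1 else 0)"

definition covm :: "'w measure \<Rightarrow> ('w \<Rightarrow> real^'m) \<Rightarrow> real^'m^'m" where
  "covm M X = (\<integral>w. outer (X w - (\<integral>v. X v \<partial>M)) (X w - (\<integral>v. X v \<partial>M)) \<partial>M)"

definition cond_exp_ev :: "'w measure \<Rightarrow> ('w \<Rightarrow> bool) \<Rightarrow> ('w \<Rightarrow> 'b::{banach,second_countable_topology}) \<Rightarrow> 'b" where
  "cond_exp_ev M P f = (\<integral>w. (if P w then f w else 0) \<partial>M) /\<^sub>R measure M {w\<in>space M. P w}"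

definition z_upper :: "real \<Rightarrow> real" where
  "z_upper \<kappa> = (THE x. (\<integral>t. indicator {x<..} t * std_normal_density t \<partial>lborel) = \<kappa>)"

text \<open>Summand U_i of the estimating equation at the true parameters beta.\<close>
definition Ufun :: "('w \<Rightarrow> real) \<Rightarrow> ('w \<Rightarrow> bool) \<Rightarrow> ('w \<Rightarrow> real) \<Rightarrow> ('w \<Rightarrow> real^'m)
    \<Rightarrow> real^'m^'m \<Rightarrow> (dtr \<Rightarrow> real) \<Rightarrow> 'w \<Rightarrow> real^dtr" where
  "Ufun A1 R A2 Y V \<beta> w =
     (\<Sum>d\<in>UNIV. (consist A1 R A2 d w * weight A1 R w) *\<^sub>R
        (transpose (Dmat d :: real^dtr^'m) *v (matrix_inv V *v (Y w - \<beta> d *\<^sub>R ones))))"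

definition Jmat :: "'w measure \<Rightarrow> ('w \<Rightarrow> real) \<Rightarrow> ('w \<Rightarrow> bool) \<Rightarrow> ('w \<Rightarrow> real)
    \<Rightarrow> real^'m^'m \<Rightarrow> real^dtr^dtr" where
  "Jmat M A1 R A2 V =
     (\<integral>w. (\<Sum>d\<in>UNIV. (consist A1 R A2 d w * weight A1 R w) *\<^sub>R
        (transpose (Dmat d :: real^dtr^'m) ** matrix_inv V ** Dmat d)) \<partial>M)"

definition Amat :: "'w measure \<Rightarrow> ('w \<Rightarrow> real) \<Rightarrow> ('w \<Rightarrow> bool) \<Rightarrow> ('w \<Rightarrow> real)
    \<Rightarrow> ('w \<Rightarrow> real^'m) \<Rightarrow> real^'m^'m \<Rightarrow> (dtr \<Rightarrow> real) \<Rightarrow> real^dtr^dtr" where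
  "Amat M A1 R A2 Y V \<beta> =
     (\<integral>w. outer (Ufun A1 R A2 Y V \<beta> w) (Ufun A1 R A2 Y V \<beta> w) \<partial>M)"

definition tau2 :: "'w measure \<Rightarrow> ('w \<Rightarrow> real) \<Rightarrow> ('w \<Rightarrow> bool) \<Rightarrow> ('w \<Rightarrow> real)
    \<Rightarrow> ('w \<Rightarrow> real^'m) \<Rightarrow> real^'m^'m \<Rightarrow> (dtr \<Rightarrow> real) \<Rightarrow> dtr \<Rightarrow> real" where
  "tau2 M A1 R A2 Y V \<beta> d =
     (matrix_inv (Jmat M A1 R A2 V) ** Amat M A1 R A2 Y V \<beta> ** matrix_inv (Jmat M A1 R A2 V)) $ d $ d"

end

theory Submission
  imports Defs
begin

text \<open>
  For an exchangeable working covariance V the vector 1 is an eigenvector, V 1 = c 1, so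
  1' V^-1 acts as 1'/c.  Hence J is a multiple of the identity and tau^2(d) = E[(I_d W)^2 S_d^2] / m^2,
  where S_d is the cluster sum of the residuals of the potential outcome under d.  Since A1 and A2
  are fair coins independent of the response and the potential outcomes, the weights average out:
  E[(I W)^2 S^2] = 2 E[S^2] + 2 E[1{R=0} S^2] for (1,b2), and 2 E[S^2] for (-1,.).
  Testing the Loewner condition (b) against 1 gives E[1{R=0} S^2] <= Pr(R=0) E[S^2], and under (c)
  E[S^2] = 1' Cov 1 = sigma^2 m (1 + (m-1) rho).  The sample-size bound is then elementary algebra,
  using sigma^2(1,b2) <= sigma^2(-1,.).
\<close>

section \<open>Exchangeable matrices and the design matrices\<close>

lemma ones_nth [simp]: "(ones :: real^'m) $ j = 1"
  by (simp add: ones_def)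

lemma inner_ones: "ones \<bullet> (v :: real^'m) = (\<Sum>j\<in>UNIV. v $ j)"
  by (simp add: inner_vec_def)

lemma inner_ones_ones: "(ones :: real^'m) \<bullet> ones = real CARD('m)"
  by (simp add: inner_ones)

lemma inner_ones_mult_ones: "ones \<bullet> ((K :: real^'m^'m) *v ones) = (\<Sum>i\<in>UNIV. \<Sum>j\<in>UNIV. K $ i $ j)"
  by (simp add: inner_ones matrix_vector_mult_def)

lemma inner_ones_outer_ones: "ones \<bullet> (outer u u *v ones) = (ones \<bullet> (u :: real^'m))\<^sup>2"
  unfolding inner_ones_mult_ones by (simp add: inner_ones outer_def power2_eq_square sum_product)

lemma exch_row_sum: "(\<Sum>j\<in>UNIV. (exch r :: real^'m^'m) $ i $ j) = 1 + (real CARD('m) - 1) * r"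
proof -
  have "(\<Sum>j\<in>UNIV. (exch r :: real^'m^'m) $ i $ j) = 1 + (\<Sum>j\<in>UNIV - {i}. r)"
    by (simp add: exch_def sum.remove[of UNIV i])
  also have "\<dots> = 1 + (real CARD('m) - 1) * r"
    by (simp add: card_Diff_singleton of_nat_diff Suc_leI)
  finally show ?thesis .
qed

lemma exch_mult_ones: "(exch r :: real^'m^'m) *v ones = (1 + (real CARD('m) - 1) * r) *\<^sub>R ones"
  by (simp add: vec_eq_iff matrix_vector_mult_def exch_row_sum)

lemma inner_ones_exch_ones:
  "ones \<bullet> ((c *\<^sub>R exch r :: real^'m^'m) *v ones) = c * real CARD('m) * (1 + (real CARD('m) - 1) * r)"
  by (simp add: scaleR_matrix_vector_assoc[symmetric] exch_mult_ones inner_ones_ones)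

lemma matrix_inv_unique:
  fixes A B :: "'a::comm_ring_1^'n^'n"
  assumes "A ** B = mat 1" and "B ** A = mat 1"
  shows "matrix_inv A = B"
proof -
  have "matrix_inv A ** A = mat 1"
    unfolding matrix_inv_def by (rule someI2[of _ B]) (use assms in auto)
  have "matrix_inv A = matrix_inv A ** (A ** B)"
    using assms(1) by simp
  also have "\<dots> = B"
    by (simp add: matrix_mul_assoc \<open>matrix_inv A ** A = mat 1\<close>)
  finally show ?thesis .
qed

lemma matrix_inv_scaleR_mat_1:
  assumes "c \<noteq> 0"
  shows "matrix_inv (c *\<^sub>R mat 1 :: real^'n^'n) = (1 / c) *\<^sub>R mat 1"
  by (rule matrix_inv_unique)
     (use assms in \<open>simp_all add: scalar_matrix_assoc[symmetric] matrix_scalar_ac\<close>)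

lemma
  fixes V :: "real^'m^'m"
  assumes pd: "pos_def V" and eig: "V *v ones = c *\<^sub>R ones"
  shows pos_def_eigenvalue_ones_pos: "0 < c"
    and inner_ones_matrix_inv: "ones \<bullet> (matrix_inv V *v v) = (ones \<bullet> v) / c"
proof -
  have sym: "transpose V = V" and pos: "\<And>x. x \<noteq> 0 \<Longrightarrow> 0 < x \<bullet> (V *v x)"
    using pd by (auto simp: pos_def_def)
  have "0 < ones \<bullet> (V *v ones)"
    by (rule pos) (simp add: vec_eq_iff)
  then show pos_eig: "0 < c"
    by (simp add: eig inner_ones_ones zero_less_mult_iff)
  have "invertible V"
    using pos matrix_left_invertible_ker invertible_left_inverse by (metis inner_zero_right less_irrefl)
  then have "V ** matrix_inv V = mat 1"
    unfolding invertible_def matrix_inv_def by (rule someI_ex[THEN conjunct1])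
  have "c * (ones \<bullet> (matrix_inv V *v v)) = (ones v* V) \<bullet> (matrix_inv V *v v)"
    by (metis eig sym inner_scaleR_left transpose_matrix_vector)
  also have "\<dots> = ones \<bullet> v"
    by (simp add: dot_lmul_matrix matrix_vector_mul_assoc \<open>V ** matrix_inv V = mat 1\<close>)
  finally show "ones \<bullet> (matrix_inv V *v v) = (ones \<bullet> v) / c"
    using pos_eig by (simp add: field_simps)
qed

lemma Dmat_transpose_mult:
  "(transpose (Dmat d' :: real^dtr^'m) *v z) $ d = (if d = d' then ones \<bullet> z else 0)"
  by (simp add: matrix_vector_mult_def transpose_def Dmat_def inner_ones)

lemma Dmat_congruence:
  "(transpose (Dmat d :: real^dtr^'m) ** (K :: real^'m^'m) ** Dmat d) $ a $ b
     = (if a = d \<and> b = d then ones \<bullet> (K *v ones) else 0)"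
  unfolding inner_ones_mult_ones
  by (cases "a = d"; cases "b = d")
     (simp_all add: matrix_matrix_mult_def transpose_def Dmat_def, rule sum.swap)

section \<open>Integrals of random vectors and matrices\<close>

lemma integrable_vec_componentwise:
  fixes f :: "'w \<Rightarrow> 'a::euclidean_space^'n"
  assumes "\<And>i. integrable M (\<lambda>w. f w $ i)"
  shows "integrable M f"
proof -
  have "integrable M (\<lambda>w. \<Sum>b\<in>Basis. (f w \<bullet> b) *\<^sub>R b)"
    using assms
    by (intro Bochner_Integration.integrable_sum integrable_scaleR_left)
       (auto simp: Basis_vec_def inner_axis)
  then show ?thesis
    by (simp add: euclidean_representation)
qed

lemma integrable_mat_componentwise:
  fixes F :: "'w \<Rightarrow> real^'n^'k"
  assumes "\<And>i j. integrable M (\<lambda>w. F w $ i $ j)"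
  shows "integrable M F"
  by (rule integrable_vec_componentwise, rule integrable_vec_componentwise, rule assms)

lemma integral_vec_nth:
  fixes f :: "'w \<Rightarrow> 'a::euclidean_space^'n"
  assumes "integrable M f"
  shows "integral\<^sup>L M f $ i = (\<integral>w. f w $ i \<partial>M)"
  using integral_bounded_linear[OF bounded_linear_vec_nth assms] by simp

lemma integral_mat_nth:
  fixes F :: "'w \<Rightarrow> real^'n^'k"
  assumes "integrable M F"
  shows "integral\<^sup>L M F $ i $ j = (\<integral>w. F w $ i $ j \<partial>M)"
proof -
  have "integrable M (\<lambda>w. F w $ i)"
    using integrable_bounded_linear[OF bounded_linear_vec_nth assms] .
  then show ?thesis
    by (simp add: integral_vec_nth[OF assms] integral_vec_nth)
qed

lemma integrable_bounded_mult:
  fixes f h :: "'w \<Rightarrow> real"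
  assumes "integrable M f" and "h \<in> borel_measurable M" and "\<And>w. \<bar>h w\<bar> \<le> C"
  shows "integrable M (\<lambda>w. h w * f w)"
proof (rule Bochner_Integration.integrable_bound[where f="\<lambda>w. C * f w"])
  have "\<bar>h w\<bar> * \<bar>f w\<bar> \<le> \<bar>C\<bar> * \<bar>f w\<bar>" for w
    using assms(3)[of w] by (intro mult_right_mono) auto
  then show "AE w in M. norm (h w * f w) \<le> norm (C * f w)"
    by (simp add: abs_mult)
qed (use assms borel_measurable_integrable in auto)

lemma integrable_mult_of_square_integrable:
  fixes f g :: "'w \<Rightarrow> real"
  assumes "f \<in> borel_measurable M" "g \<in> borel_measurable M"
    and "integrable M (\<lambda>w. (f w)\<^sup>2)" "integrable M (\<lambda>w. (g w)\<^sup>2)"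
  shows "integrable M (\<lambda>w. f w * g w)"
proof (rule Bochner_Integration.integrable_bound[where f="\<lambda>w. (f w)\<^sup>2 + (g w)\<^sup>2"])
  have "\<bar>a * b\<bar> \<le> a\<^sup>2 + b\<^sup>2" for a b :: real
    using sum_squares_bound[of "\<bar>a\<bar>" "\<bar>b\<bar>"] abs_mult[of a b] zero_le_mult_iff[of "\<bar>a\<bar>" "\<bar>b\<bar>"]
    by simp
  then show "AE w in M. norm (f w * g w) \<le> norm ((f w)\<^sup>2 + (g w)\<^sup>2)"
    by simp
qed (use assms in auto)

lemma (in finite_measure) square_integrable_diff_const:
  fixes f :: "'a \<Rightarrow> real"
  assumes [measurable]: "f \<in> borel_measurable M" and "integrable M (\<lambda>w. (f w)\<^sup>2)"
  shows "integrable M (\<lambda>w. (f w - c)\<^sup>2)"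
proof -
  have "integrable M f"
    using assms by (rule square_integrable_imp_integrable)
  then have "integrable M (\<lambda>w. (f w)\<^sup>2 + c\<^sup>2 - 2 * f w * c)"
    using assms(2) by (intro Bochner_Integration.integrable_diff Bochner_Integration.integrable_add) auto
  then show ?thesis
    by (simp add: power2_diff)
qed

lemma
  fixes F :: "'w \<Rightarrow> real^'m^'m"
  assumes "integrable M F"
  shows integrable_inner_ones_mult_ones: "integrable M (\<lambda>w. ones \<bullet> (F w *v ones))"
    and integral_inner_ones_mult_ones:
      "ones \<bullet> (integral\<^sup>L M F *v ones) = (\<integral>w. ones \<bullet> (F w *v ones) \<partial>M)"
proof -
  have entries: "integrable M (\<lambda>w. F w $ i $ j)" for i j
    by (intro integrable_bounded_linear[OF bounded_linear_vec_nth]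
        integrable_bounded_linear[OF bounded_linear_vec_nth assms, of i])
  then show "integrable M (\<lambda>w. ones \<bullet> (F w *v ones))"
    unfolding inner_ones_mult_ones by simp
  show "ones \<bullet> (integral\<^sup>L M F *v ones) = (\<integral>w. ones \<bullet> (F w *v ones) \<partial>M)"
    unfolding inner_ones_mult_ones using entries
    by (simp add: integral_mat_nth[OF assms] Bochner_Integration.integral_sum)
qed

section \<open>Fair randomisation\<close>

lemma (in prob_space) indep_var_compose_vimage:
  assumes indep: "indep_set (sets (vimage_algebra (space M) X S)) (sets (vimage_algebra (space M) Y T))"
    and X: "X \<in> M \<rightarrow>\<^sub>M S" and Y: "Y \<in> M \<rightarrow>\<^sub>M T"
    and f: "f \<in> S \<rightarrow>\<^sub>M N" and g: "g \<in> T \<rightarrow>\<^sub>M N"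
  shows "indep_var N (\<lambda>w. f (X w)) N (\<lambda>w. g (Y w))"
proof -
  have generated_le:
    "sigma_sets (space M) {(\<lambda>w. h (Z w)) -` A \<inter> space M | A. A \<in> sets N}
       \<subseteq> sets (vimage_algebra (space M) Z Q)"
    if Z: "Z \<in> M \<rightarrow>\<^sub>M Q" and h: "h \<in> Q \<rightarrow>\<^sub>M N" for Z Q h
  proof -
    have "{(\<lambda>w. h (Z w)) -` A \<inter> space M | A. A \<in> sets N} \<subseteq> {Z -` B \<inter> space M | B. B \<in> sets Q}"
    proof safe
      fix A assume "A \<in> sets N"
      then have "h -` A \<inter> space Q \<in> sets Q"
        using h by measurable
      moreover have "(\<lambda>w. h (Z w)) -` A \<inter> space M = Z -` (h -` A \<inter> space Q) \<inter> space M"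
        using measurable_space[OF Z] by auto
      ultimately show "\<exists>B. (\<lambda>w. h (Z w)) -` A \<inter> space M = Z -` B \<inter> space M \<and> B \<in> sets Q"
        by blast
    qed
    then show ?thesis
      unfolding sets_vimage_algebra by (rule sigma_sets_subseteq)
  qed
  have "indep_sets (case_bool (sigma_sets (space M) {(\<lambda>w. f (X w)) -` A \<inter> space M | A. A \<in> sets N})
                              (sigma_sets (space M) {(\<lambda>w. g (Y w)) -` A \<inter> space M | A. A \<in> sets N})) UNIV"
    using indep unfolding indep_set_def
    by (rule indep_sets_mono_sets)
       (use generated_le[OF X f] generated_le[OF Y g] in \<open>auto split: bool.split\<close>)
  moreover have "random_variable N (\<lambda>w. f (X w))" "random_variable N (\<lambda>w. g (Y w))"
    using measurable_compose[OF X f] measurable_compose[OF Y g] by auto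
  ultimately show ?thesis
    unfolding indep_var_eq indep_set_def by auto
qed

lemma (in prob_space) prob_fair_sign:
  fixes X :: "'a \<Rightarrow> real"
  assumes [measurable]: "X \<in> borel_measurable M"
    and "\<And>w. X w = 1 \<or> X w = -1" and "prob {w\<in>space M. X w = 1} = 1/2"
    and "c = 1 \<or> c = -1"
  shows "prob {w\<in>space M. X w = c} = 1/2"
proof -
  have "{w\<in>space M. X w = -1} = space M - {w\<in>space M. X w = 1}"
    using assms(2) by force
  then have "prob {w\<in>space M. X w = -1} = 1/2"
    using prob_compl[of "{w\<in>space M. X w = 1}"] assms(3) by simp
  then show ?thesis
    using assms(3,4) by auto
qed

lemma integral_of_bool:
  "(\<integral>w. of_bool (P w) \<partial>M) = measure M {w\<in>space M. P w}"
proof -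
  have "(\<integral>w. of_bool (P w) \<partial>M) = (\<integral>w. indicator {w\<in>space M. P w} w \<partial>M)"
    by (rule Bochner_Integration.integral_cong) (auto simp: indicator_def)
  also have "\<dots> = measure M ({w\<in>space M. P w} \<inter> space M)"
    by (rule Bochner_Integration.integral_indicator)
  also have "{w\<in>space M. P w} \<inter> space M = {w\<in>space M. P w}"
    by blast
  finally show ?thesis .
qed

lemma (in prob_space) integral_fair_sign_mult:
  fixes X :: "'a \<Rightarrow> real" and Z :: "'a \<Rightarrow> 'b" and \<Phi> :: "'b \<Rightarrow> real"
  assumes indep: "indep_set (sets (vimage_algebra (space M) X borel)) (sets (vimage_algebra (space M) Z N))"
    and X [measurable]: "X \<in> borel_measurable M" and Z [measurable]: "Z \<in> M \<rightarrow>\<^sub>M N"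
    and X_vals: "\<And>w. X w = 1 \<or> X w = -1" and X_prob: "prob {w\<in>space M. X w = 1} = 1/2"
    and c: "c = 1 \<or> c = -1"
    and \<Phi> [measurable]: "\<Phi> \<in> borel_measurable N" and int: "integrable M (\<lambda>w. \<Phi> (Z w))"
  shows "(\<integral>w. of_bool (X w = c) * \<Phi> (Z w) \<partial>M) = (\<integral>w. \<Phi> (Z w) \<partial>M) / 2"
proof -
  have "indep_var borel (\<lambda>w. of_bool (X w = c) :: real) borel (\<lambda>w. \<Phi> (Z w))"
    by (rule indep_var_compose_vimage[OF indep X Z]) measurable
  then have "(\<integral>w. of_bool (X w = c) * \<Phi> (Z w) \<partial>M)
      = (\<integral>w. of_bool (X w = c) \<partial>M) * (\<integral>w. \<Phi> (Z w) \<partial>M)"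
    by (rule indep_var_lebesgue_integral)
       (auto intro: integrable_const_bound[where B=1] simp: int)
  also have "(\<integral>w. of_bool (X w = c) \<partial>M) = (1/2 :: real)"
    using prob_fair_sign[OF X X_vals X_prob c] by (simp add: integral_of_bool)
  finally show ?thesis
    by simp
qed

section \<open>The ADEPT-type SMART\<close>

type_synonym 'm potential = "bool \<times> (real^'m) \<times> (real^'m) \<times> (real^'m)"

definition outcome_of :: "dtr \<Rightarrow> bool \<times> 'a \<times> 'a \<times> 'a \<Rightarrow> 'a" where
  "outcome_of d p = (case d of
      DTR_1_1 \<Rightarrow> fst (snd p) | DTR_1_m1 \<Rightarrow> fst (snd (snd p)) | DTR_m1 \<Rightarrow> snd (snd (snd p)))"

abbreviation potential_space :: "('m::finite) potential measure" where
  "potential_space \<equiv> count_space UNIV \<Otimes>\<^sub>M borel \<Otimes>\<^sub>M borel \<Otimes>\<^sub>M borel"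

lemma measurable_outcome_of [measurable]: "outcome_of d \<in> potential_space \<rightarrow>\<^sub>M borel"
  unfolding outcome_of_def by (cases d) simp_all

locale adept_smart = prob_space M for M :: "'w measure" +
  fixes A1 A2 :: "'w \<Rightarrow> real" and R :: "'w \<Rightarrow> bool"
    and Ypot :: "dtr \<Rightarrow> 'w \<Rightarrow> real^'m" and Y :: "'w \<Rightarrow> real^'m"
    and \<beta> :: "dtr \<Rightarrow> real"
  assumes meas_A1 [measurable]: "A1 \<in> borel_measurable M"
    and meas_A2 [measurable]: "A2 \<in> borel_measurable M"
    and meas_R [measurable]: "R \<in> measurable M (count_space UNIV)"
    and meas_Ypot [measurable]: "\<And>d. Ypot d \<in> borel_measurable M"
    and sq_int: "\<And>d j. integrable M (\<lambda>w. (Ypot d w $ j)\<^sup>2)"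
    and A1_vals: "\<And>w. A1 w = 1 \<or> A1 w = -1"
    and A2_vals: "\<And>w. A2 w = 1 \<or> A2 w = -1"
    and A1_prob: "prob {w\<in>space M. A1 w = 1} = 1/2"
    and A2_prob: "prob {w\<in>space M. A2 w = 1} = 1/2"
    and A1_indep: "indep_set (sets (vimage_algebra (space M) A1 borel))
         (sets (vimage_algebra (space M)
            (\<lambda>w. (A2 w, R w, Ypot DTR_1_1 w, Ypot DTR_1_m1 w, Ypot DTR_m1 w)) (borel \<Otimes>\<^sub>M potential_space)))"
    and A2_indep: "indep_set (sets (vimage_algebra (space M) A2 borel))
         (sets (vimage_algebra (space M)
            (\<lambda>w. (R w, Ypot DTR_1_1 w, Ypot DTR_1_m1 w, Ypot DTR_m1 w)) potential_space))"
    and mean_model: "\<And>d j. (\<integral>w. Ypot d w $ j \<partial>M) = \<beta> d"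
    and consistency: "\<And>d w. consist A1 R A2 d w = 1 \<Longrightarrow> Y w = Ypot d w"
begin

text \<open>The response R belongs to the baseline: the randomisation assumptions make it, together
  with the potential outcomes, independent of both coins.\<close>

definition potentials :: "'w \<Rightarrow> 'm potential" where
  "potentials w = (R w, Ypot DTR_1_1 w, Ypot DTR_1_m1 w, Ypot DTR_m1 w)"

definition ipw :: "dtr \<Rightarrow> 'w \<Rightarrow> real" where
  "ipw d w = consist A1 R A2 d w * weight A1 R w"

definition cluster_residual :: "dtr \<Rightarrow> 'w \<Rightarrow> real" where
  "cluster_residual d w = ones \<bullet> (Ypot d w - \<beta> d *\<^sub>R ones)"

lemma measurable_potentials [measurable]: "potentials \<in> M \<rightarrow>\<^sub>M potential_space"
  unfolding potentials_def by measurable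

lemma fst_potentials [simp]: "fst (potentials w) = R w"
  by (simp add: potentials_def)

lemma Ypot_eq_outcome_of: "Ypot d w = outcome_of d (potentials w)"
  by (cases d) (simp_all add: outcome_of_def potentials_def)

lemma pred_A1 [measurable]: "Measurable.pred M (\<lambda>w. A1 w = c)"
  using pred_eq_const1[OF meas_A1] by simp

lemma pred_A2 [measurable]: "Measurable.pred M (\<lambda>w. A2 w = c)"
  using pred_eq_const1[OF meas_A2] by simp

lemma integral_A1_mult:
  fixes \<Phi> :: "real \<times> 'm potential \<Rightarrow> real"
  assumes "\<Phi> \<in> borel_measurable (borel \<Otimes>\<^sub>M potential_space)"
    and "integrable M (\<lambda>w. \<Phi> (A2 w, potentials w))" and "c = 1 \<or> c = -1"
  shows "(\<integral>w. of_bool (A1 w = c) * \<Phi> (A2 w, potentials w) \<partial>M) = (\<integral>w. \<Phi> (A2 w, potentials w) \<partial>M) / 2"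
  using assms unfolding potentials_def
  by (intro integral_fair_sign_mult[OF A1_indep]) (simp_all add: A1_vals A1_prob)

lemma integral_A2_mult:
  fixes \<Phi> :: "'m potential \<Rightarrow> real"
  assumes "\<Phi> \<in> borel_measurable potential_space"
    and "integrable M (\<lambda>w. \<Phi> (potentials w))" and "c = 1 \<or> c = -1"
  shows "(\<integral>w. of_bool (A2 w = c) * \<Phi> (potentials w) \<partial>M) = (\<integral>w. \<Phi> (potentials w) \<partial>M) / 2"
  using assms unfolding potentials_def
  by (intro integral_fair_sign_mult[OF A2_indep]) (simp_all add: A2_vals A2_prob)

lemma integral_A1_A2_mult:
  fixes \<Phi> :: "'m potential \<Rightarrow> real"
  assumes [measurable]: "\<Phi> \<in> borel_measurable potential_space"
    and int: "integrable M (\<lambda>w. \<Phi> (potentials w))" and c: "c = 1 \<or> c = -1"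
  shows "(\<integral>w. of_bool (A1 w = 1) * (of_bool (A2 w = c) * \<Phi> (potentials w)) \<partial>M)
    = (\<integral>w. \<Phi> (potentials w) \<partial>M) / 4"
proof -
  have "integrable M (\<lambda>w. of_bool (A2 w = c) * \<Phi> (potentials w))"
    by (rule integrable_bounded_mult[OF int, where C=1]) auto
  then have "(\<integral>w. of_bool (A1 w = 1) * (of_bool (A2 w = c) * \<Phi> (potentials w)) \<partial>M)
      = (\<integral>w. of_bool (A2 w = c) * \<Phi> (potentials w) \<partial>M) / 2"
    using integral_A1_mult[of "\<lambda>(a, p). of_bool (a = c) * \<Phi> p" 1] by simp
  also have "\<dots> = (\<integral>w. \<Phi> (potentials w) \<partial>M) / 4"
    using integral_A2_mult[OF _ int c] by simp
  finally show ?thesis .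
qed

\<comment> \<open>Stated for \<open>Suc n\<close> because \<open>0 ^ 0 = 1\<close>.\<close>
lemma ipw_dtr1_power:
  assumes "b = 1 \<or> b = -1"
  shows "ipw (dtr1 b) w ^ Suc n
    = of_bool (A1 w = 1) * (2 ^ Suc n * of_bool (R w) + 4 ^ Suc n * (of_bool (A2 w = b) * of_bool (\<not> R w)))"
  using assms by (auto simp: ipw_def consist_def weight_def dtr1_def)

lemma ipw_DTR_m1_power: "ipw DTR_m1 w ^ Suc n = 2 ^ Suc n * of_bool (A1 w = -1)"
  by (auto simp: ipw_def consist_def weight_def)

lemma abs_ipw_le: "\<bar>ipw d w\<bar> \<le> 4"
  by (cases d) (auto simp: ipw_def consist_def weight_def)

lemma measurable_ipw [measurable]: "ipw d \<in> borel_measurable M"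
  unfolding ipw_def consist_def weight_def by (cases d) simp_all

lemma integral_ipw_dtr1_power_mult:
  fixes \<Phi> :: "'m potential \<Rightarrow> real"
  assumes b: "b = 1 \<or> b = -1"
    and [measurable]: "\<Phi> \<in> borel_measurable potential_space"
    and int: "integrable M (\<lambda>w. \<Phi> (potentials w))"
  shows "(\<integral>w. ipw (dtr1 b) w ^ Suc n * \<Phi> (potentials w) \<partial>M)
    = 2 ^ n * (\<integral>w. of_bool (R w) * \<Phi> (potentials w) \<partial>M)
      + 4 ^ n * (\<integral>w. of_bool (\<not> R w) * \<Phi> (potentials w) \<partial>M)"
proof -
  define \<Phi>R where "\<Phi>R p = of_bool (fst p) * \<Phi> p" for p :: "'m potential"
  define \<Phi>N where "\<Phi>N p = of_bool (\<not> fst p) * \<Phi> p" for p :: "'m potential"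
  have [measurable]: "\<Phi>R \<in> borel_measurable potential_space" "\<Phi>N \<in> borel_measurable potential_space"
    unfolding \<Phi>R_def \<Phi>N_def by measurable
  have intR: "integrable M (\<lambda>w. \<Phi>R (potentials w))" and intN: "integrable M (\<lambda>w. \<Phi>N (potentials w))"
    unfolding \<Phi>R_def \<Phi>N_def by (auto intro!: integrable_bounded_mult[OF int, where C=1])
  have "(\<integral>w. ipw (dtr1 b) w ^ Suc n * \<Phi> (potentials w) \<partial>M)
      = (\<integral>w. 2 ^ Suc n * (of_bool (A1 w = 1) * \<Phi>R (potentials w))
            + 4 ^ Suc n * (of_bool (A1 w = 1) * (of_bool (A2 w = b) * \<Phi>N (potentials w))) \<partial>M)"
    unfolding ipw_dtr1_power[OF b]
    by (rule Bochner_Integration.integral_cong) (auto simp: \<Phi>R_def \<Phi>N_def algebra_simps)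
  also have "\<dots> = 2 ^ Suc n * (\<integral>w. of_bool (A1 w = 1) * \<Phi>R (potentials w) \<partial>M)
      + 4 ^ Suc n * (\<integral>w. of_bool (A1 w = 1) * (of_bool (A2 w = b) * \<Phi>N (potentials w)) \<partial>M)"
    using intR intN
    by (simp add: integrable_bounded_mult[where C=1] Bochner_Integration.integral_add)
  also have "(\<integral>w. of_bool (A1 w = 1) * \<Phi>R (potentials w) \<partial>M) = (\<integral>w. \<Phi>R (potentials w) \<partial>M) / 2"
    using integral_A1_mult[of "\<lambda>(a, p). \<Phi>R p" 1] intR by simp
  also have "(\<integral>w. of_bool (A1 w = 1) * (of_bool (A2 w = b) * \<Phi>N (potentials w)) \<partial>M)
      = (\<integral>w. \<Phi>N (potentials w) \<partial>M) / 4"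
    by (rule integral_A1_A2_mult[OF _ intN b]) measurable
  finally show ?thesis
    by (simp add: \<Phi>R_def \<Phi>N_def)
qed

lemma integral_ipw_DTR_m1_power_mult:
  fixes \<Phi> :: "'m potential \<Rightarrow> real"
  assumes [measurable]: "\<Phi> \<in> borel_measurable potential_space"
    and int: "integrable M (\<lambda>w. \<Phi> (potentials w))"
  shows "(\<integral>w. ipw DTR_m1 w ^ Suc n * \<Phi> (potentials w) \<partial>M) = 2 ^ n * (\<integral>w. \<Phi> (potentials w) \<partial>M)"
proof -
  have "(\<integral>w. ipw DTR_m1 w ^ Suc n * \<Phi> (potentials w) \<partial>M)
      = 2 ^ Suc n * (\<integral>w. of_bool (A1 w = -1) * \<Phi> (potentials w) \<partial>M)"
    unfolding ipw_DTR_m1_power by (simp add: mult.assoc)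
  also have "(\<integral>w. of_bool (A1 w = -1) * \<Phi> (potentials w) \<partial>M) = (\<integral>w. \<Phi> (potentials w) \<partial>M) / 2"
    using integral_A1_mult[of "\<lambda>(a, p). \<Phi> p" "-1"] int by simp
  finally show ?thesis
    by simp
qed

lemma integral_of_bool_R_split:
  fixes f :: "'w \<Rightarrow> real"
  assumes "integrable M f"
  shows "(\<integral>w. of_bool (R w) * f w \<partial>M) + (\<integral>w. of_bool (\<not> R w) * f w \<partial>M) = (\<integral>w. f w \<partial>M)"
proof -
  have "(\<integral>w. of_bool (R w) * f w \<partial>M) + (\<integral>w. of_bool (\<not> R w) * f w \<partial>M)
      = (\<integral>w. of_bool (R w) * f w + of_bool (\<not> R w) * f w \<partial>M)"
    using assms by (intro Bochner_Integration.integral_add[symmetric] integrable_bounded_mult[where C=1]) auto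
  also have "\<dots> = (\<integral>w. f w \<partial>M)"
    by (rule Bochner_Integration.integral_cong) auto
  finally show ?thesis .
qed

lemma integral_ipw: "(\<integral>w. ipw d w \<partial>M) = 1"
proof -
  have dtr1: "(\<integral>w. ipw (dtr1 b) w \<partial>M) = 1" if b: "b = 1 \<or> b = -1" for b
  proof -
    \<comment> \<open>The integrands are kept unreduced so that the rule matches them syntactically.\<close>
    have "(\<integral>w. ipw (dtr1 b) w ^ Suc 0 * (\<lambda>_. 1) (potentials w) \<partial>M)
        = 2 ^ 0 * (\<integral>w. of_bool (R w) * (\<lambda>_. 1) (potentials w) \<partial>M)
          + 4 ^ 0 * (\<integral>w. of_bool (\<not> R w) * (\<lambda>_. 1) (potentials w) \<partial>M)"
      by (rule integral_ipw_dtr1_power_mult[OF b]) auto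
    then show ?thesis
      using integral_of_bool_R_split[of "\<lambda>_. 1"] by (simp add: prob_space)
  qed
  have "(\<integral>w. ipw DTR_m1 w ^ Suc 0 * (\<lambda>_. 1) (potentials w) \<partial>M)
      = 2 ^ 0 * (\<integral>w. (\<lambda>_. 1) (potentials w) \<partial>M)"
    by (rule integral_ipw_DTR_m1_power_mult) auto
  then have "(\<integral>w. ipw DTR_m1 w \<partial>M) = 1"
    by (simp add: prob_space)
  with dtr1[of 1] dtr1[of "-1"] show ?thesis
    by (cases d) (simp_all add: dtr1_def)
qed

lemma response_rate:
  "prob {w\<in>space M. A1 w = 1 \<and> R w} / prob {w\<in>space M. A1 w = 1} = 1 - prob {w\<in>space M. \<not> R w}"
proof -
  have "(\<integral>w. of_bool (A1 w = 1) * of_bool (fst (snd (A2 w, potentials w))) \<partial>M)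
      = (\<integral>w. of_bool (fst (snd (A2 w, potentials w))) \<partial>M) / (2 :: real)"
    by (rule integral_A1_mult[where \<Phi>="\<lambda>x. of_bool (fst (snd x))" and c=1])
       (auto intro: integrable_const_bound[where B=1])
  then have "prob {w\<in>space M. A1 w = 1 \<and> R w} = prob {w\<in>space M. R w} / 2"
    by (simp add: integral_of_bool flip: of_bool_conj)
  moreover have "prob {w\<in>space M. R w} = 1 - prob {w\<in>space M. \<not> R w}"
  proof -
    have "space M - {w\<in>space M. \<not> R w} = {w\<in>space M. R w}"
      by blast
    then show ?thesis
      using prob_compl[of "{w\<in>space M. \<not> R w}"] by simp
  qed
  ultimately show ?thesis
    by (simp add: A1_prob)
qed

lemma measurable_Ypot_nth [measurable]: "(\<lambda>w. Ypot d w $ j) \<in> borel_measurable M"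
  by (rule measurable_compose[OF meas_Ypot borel_measurable_continuous_onI]) (intro continuous_intros)

lemma integrable_Ypot_nth_centred_product:
  "integrable M (\<lambda>w. (Ypot d w $ i - c) * (Ypot d' w $ j - c'))"
  using square_integrable_diff_const[OF measurable_Ypot_nth sq_int]
  by (intro integrable_mult_of_square_integrable) auto

lemma integrable_outer_centred:
  "integrable M (\<lambda>w. outer (Ypot d w - \<beta> d *\<^sub>R ones) (Ypot d w - \<beta> d *\<^sub>R ones))"
  by (rule integrable_mat_componentwise) (simp add: outer_def integrable_Ypot_nth_centred_product)

lemma cluster_residual_sq:
  "(cluster_residual d w)\<^sup>2 = ones \<bullet> (outer (Ypot d w - \<beta> d *\<^sub>R ones) (Ypot d w - \<beta> d *\<^sub>R ones) *v ones)"
  by (simp add: cluster_residual_def inner_ones_outer_ones)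

lemma integrable_cluster_residual_sq: "integrable M (\<lambda>w. (cluster_residual d w)\<^sup>2)"
  unfolding cluster_residual_sq by (rule integrable_inner_ones_mult_ones[OF integrable_outer_centred])

lemma integrable_cluster_residual_product: "integrable M (\<lambda>w. cluster_residual d w * cluster_residual d' w)"
  by (intro integrable_mult_of_square_integrable integrable_cluster_residual_sq)
     (simp_all add: cluster_residual_def)

lemma covm_Ypot: "covm M (Ypot d) = (\<integral>w. outer (Ypot d w - \<beta> d *\<^sub>R ones) (Ypot d w - \<beta> d *\<^sub>R ones) \<partial>M)"
proof -
  have "integrable M (Ypot d)"
    using square_integrable_imp_integrable[OF measurable_Ypot_nth sq_int]
    by (rule integrable_vec_componentwise)
  then have "(\<integral>w. Ypot d w \<partial>M) = \<beta> d *\<^sub>R ones"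
    by (simp add: vec_eq_iff integral_vec_nth mean_model)
  then show ?thesis
    by (simp add: covm_def)
qed

lemma integral_cluster_residual_sq: "(\<integral>w. (cluster_residual d w)\<^sup>2 \<partial>M) = ones \<bullet> (covm M (Ypot d) *v ones)"
  unfolding cluster_residual_sq covm_Ypot
  by (rule integral_inner_ones_mult_ones[OF integrable_outer_centred, symmetric])

lemma integral_nonresponder_cluster_residual_sq_le:
  assumes "loewner_le
      (cond_exp_ev M (\<lambda>w. \<not> R w) (\<lambda>w. outer (Ypot d w - \<beta> d *\<^sub>R ones) (Ypot d w - \<beta> d *\<^sub>R ones)))
      (covm M (Ypot d))"
  shows "(\<integral>w. of_bool (\<not> R w) * (cluster_residual d w)\<^sup>2 \<partial>M)
    \<le> prob {w\<in>space M. \<not> R w} * (\<integral>w. (cluster_residual d w)\<^sup>2 \<partial>M)"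
proof (cases "prob {w\<in>space M. \<not> R w} = 0")
  case True
  \<comment> \<open>Then \<open>cond_exp_ev\<close> divides by zero and (b) carries no information; the integrand vanishes a.e.\<close>
  then have "AE w in M. R w"
    by (subst AE_iff_measurable[OF _ refl]) (auto simp: emeasure_eq_measure)
  then have "(\<integral>w. of_bool (\<not> R w) * (cluster_residual d w)\<^sup>2 \<partial>M) = (\<integral>w. 0 \<partial>M)"
    by (intro integral_cong_AE) (auto simp: cluster_residual_def)
  then show ?thesis
    by simp
next
  case False
  define q where "q = prob {w\<in>space M. \<not> R w}"
  have "0 < q"
    using False by (simp add: q_def zero_less_measure_iff)
  let ?E = "\<lambda>w. outer (Ypot d w - \<beta> d *\<^sub>R ones) (Ypot d w - \<beta> d *\<^sub>R ones)"
  have "(\<lambda>w. if \<not> R w then ?E w else 0) = (\<lambda>w. of_bool (\<not> R w) *\<^sub>R ?E w)"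
    by auto
  moreover have int: "integrable M (\<lambda>w. of_bool (\<not> R w) *\<^sub>R ?E w)"
    by (rule integrable_mat_componentwise)
       (auto simp: outer_def intro!: integrable_bounded_mult[where C=1] integrable_Ypot_nth_centred_product)
  ultimately have "ones \<bullet> (cond_exp_ev M (\<lambda>w. \<not> R w) ?E *v ones)
      = (\<integral>w. of_bool (\<not> R w) * (cluster_residual d w)\<^sup>2 \<partial>M) / q"
    by (simp add: cond_exp_ev_def q_def scaleR_matrix_vector_assoc[symmetric]
        integral_inner_ones_mult_ones[OF int] cluster_residual_sq divide_inverse mult.commute)
  moreover have "ones \<bullet> (cond_exp_ev M (\<lambda>w. \<not> R w) ?E *v ones) \<le> ones \<bullet> (covm M (Ypot d) *v ones)"
    using assms by (simp add: loewner_le_def)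
  ultimately show ?thesis
    using \<open>0 < q\<close> by (simp add: q_def integral_cluster_residual_sq divide_le_eq mult.commute)
qed

lemma Jmat_eq:
  fixes V :: "real^'m^'m"
  shows "Jmat M A1 R A2 V = (ones \<bullet> (matrix_inv V *v ones)) *\<^sub>R mat 1"
proof -
  let ?K = "\<lambda>d. transpose (Dmat d :: real^dtr^'m) ** matrix_inv V ** Dmat d"
  have int: "integrable M (ipw d)" for d
    using abs_ipw_le by (intro integrable_const_bound[where B=4]) auto
  have "Jmat M A1 R A2 V = (\<Sum>d\<in>UNIV. (\<integral>w. ipw d w *\<^sub>R ?K d \<partial>M))"
    unfolding Jmat_def ipw_def[symmetric] using int by (simp add: Bochner_Integration.integral_sum)
  also have "\<dots> = (\<Sum>d\<in>UNIV. ?K d)"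
    using int by (simp add: integral_ipw)
  also have "\<dots> = (ones \<bullet> (matrix_inv V *v ones)) *\<^sub>R mat 1"
    by (simp add: vec_eq_iff sum_component Dmat_congruence mat_def UNIV_dtr) (metis dtr.exhaust)
  finally show ?thesis .
qed

lemma Ufun_nth:
  fixes V :: "real^'m^'m"
  assumes "\<And>v. ones \<bullet> (matrix_inv V *v v) = (ones \<bullet> v) / c"
  shows "Ufun A1 R A2 Y V \<beta> w $ d = ipw d w * cluster_residual d w / c"
proof -
  have "Ufun A1 R A2 Y V \<beta> w $ d = ipw d w * (ones \<bullet> (Y w - \<beta> d *\<^sub>R ones)) / c"
    by (simp add: Ufun_def sum_component Dmat_transpose_mult ipw_def assms if_distrib
        cong: if_cong del: transpose_matrix_vector)
  also have "ipw d w * (ones \<bullet> (Y w - \<beta> d *\<^sub>R ones)) = ipw d w * cluster_residual d w"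
    using consistency[of d w]
    by (cases d) (auto simp: ipw_def consist_def cluster_residual_def)
  finally show ?thesis .
qed

lemma Amat_diag:
  fixes V :: "real^'m^'m"
  assumes "\<And>v. ones \<bullet> (matrix_inv V *v v) = (ones \<bullet> v) / c"
  shows "Amat M A1 R A2 Y V \<beta> $ d $ d = (\<integral>w. (ipw d w * cluster_residual d w)\<^sup>2 \<partial>M) / c\<^sup>2"
proof -
  let ?U = "Ufun A1 R A2 Y V \<beta>"
  have entry: "outer (?U w) (?U w) $ i $ j
      = (ipw i w * ipw j w / c\<^sup>2) * (cluster_residual i w * cluster_residual j w)" for w i j
    by (simp add: outer_def Ufun_nth[OF assms] power2_eq_square)
  have "integrable M (\<lambda>w. outer (?U w) (?U w))"
  proof (rule integrable_mat_componentwise)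
    fix i j
    have "\<bar>ipw i w * ipw j w / c\<^sup>2\<bar> \<le> 16 / c\<^sup>2" for w
      using mult_mono[OF abs_ipw_le abs_ipw_le] by (simp add: abs_mult divide_right_mono)
    then show "integrable M (\<lambda>w. outer (?U w) (?U w) $ i $ j)"
      unfolding entry
      by (intro integrable_bounded_mult[OF integrable_cluster_residual_product]) auto
  qed
  then have "Amat M A1 R A2 Y V \<beta> $ d $ d = (\<integral>w. outer (?U w) (?U w) $ d $ d \<partial>M)"
    unfolding Amat_def by (rule integral_mat_nth)
  then show ?thesis
    by (simp add: entry power2_eq_square algebra_simps)
qed

lemma tau2_eq:
  fixes V :: "real^'m^'m"
  assumes "pos_def V" and "V *v ones = c *\<^sub>R ones"
  shows "tau2 M A1 R A2 Y V \<beta> d = (\<integral>w. (ipw d w * cluster_residual d w)\<^sup>2 \<partial>M) / (real CARD('m))\<^sup>2"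
proof -
  have "0 < c" and inv: "\<And>v. ones \<bullet> (matrix_inv V *v v) = (ones \<bullet> v) / c"
    using pos_def_eigenvalue_ones_pos[OF assms] inner_ones_matrix_inv[OF assms] by auto
  define \<kappa> where "\<kappa> = real CARD('m) / c"
  have "\<kappa> \<noteq> 0"
    using \<open>0 < c\<close> by (simp add: \<kappa>_def)
  have "Jmat M A1 R A2 V = \<kappa> *\<^sub>R mat 1"
    by (simp add: Jmat_eq inv inner_ones_ones \<kappa>_def)
  then have "tau2 M A1 R A2 Y V \<beta> d = (Amat M A1 R A2 Y V \<beta> $ d $ d) / \<kappa>\<^sup>2"
    by (simp add: tau2_def matrix_inv_scaleR_mat_1[OF \<open>\<kappa> \<noteq> 0\<close>] power2_eq_square
        matrix_scalar_ac flip: scalar_matrix_assoc)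
  then show ?thesis
    using \<open>0 < c\<close> by (simp add: Amat_diag[OF inv] \<kappa>_def power2_eq_square field_simps)
qed

lemma cluster_residual_sq_potentials:
  obtains \<Phi> :: "'m potential \<Rightarrow> real"
  where "\<Phi> \<in> borel_measurable potential_space" and "\<And>w. (cluster_residual d w)\<^sup>2 = \<Phi> (potentials w)"
proof
  show "(\<lambda>p. (ones \<bullet> (outcome_of d p - \<beta> d *\<^sub>R ones))\<^sup>2) \<in> borel_measurable potential_space"
    by measurable
qed (simp add: cluster_residual_def Ypot_eq_outcome_of)

lemma tau2_dtr1:
  fixes V :: "real^'m^'m"
  assumes b: "b = 1 \<or> b = -1" and V: "pos_def V" "V *v ones = c *\<^sub>R ones"
  shows "tau2 M A1 R A2 Y V \<beta> (dtr1 b)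
    = 2 * ((\<integral>w. (cluster_residual (dtr1 b) w)\<^sup>2 \<partial>M)
           + (\<integral>w. of_bool (\<not> R w) * (cluster_residual (dtr1 b) w)\<^sup>2 \<partial>M)) / (real CARD('m))\<^sup>2"
proof -
  obtain \<Phi> where [measurable]: "\<Phi> \<in> borel_measurable potential_space"
    and \<Phi>: "\<And>w. (cluster_residual (dtr1 b) w)\<^sup>2 = \<Phi> (potentials w)"
    using cluster_residual_sq_potentials by blast
  have int: "integrable M (\<lambda>w. \<Phi> (potentials w))"
    using integrable_cluster_residual_sq by (simp add: \<Phi> flip: \<Phi>)
  have "(\<integral>w. (ipw (dtr1 b) w * cluster_residual (dtr1 b) w)\<^sup>2 \<partial>M)
      = (\<integral>w. ipw (dtr1 b) w ^ Suc 1 * \<Phi> (potentials w) \<partial>M)"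
    by (simp add: power2_eq_square mult_ac flip: \<Phi>)
  also have "\<dots> = 2 * (\<integral>w. of_bool (R w) * \<Phi> (potentials w) \<partial>M)
      + 4 * (\<integral>w. of_bool (\<not> R w) * \<Phi> (potentials w) \<partial>M)"
    using integral_ipw_dtr1_power_mult[OF b _ int, of 1] by simp
  also have "\<dots> = 2 * ((\<integral>w. \<Phi> (potentials w) \<partial>M) + (\<integral>w. of_bool (\<not> R w) * \<Phi> (potentials w) \<partial>M))"
    using integral_of_bool_R_split[OF int] by simp
  finally show ?thesis
    by (simp add: tau2_eq[OF V] \<Phi>)
qed

lemma tau2_DTR_m1:
  fixes V :: "real^'m^'m"
  assumes V: "pos_def V" "V *v ones = c *\<^sub>R ones"
  shows "tau2 M A1 R A2 Y V \<beta> DTR_m1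
    = 2 * (\<integral>w. (cluster_residual DTR_m1 w)\<^sup>2 \<partial>M) / (real CARD('m))\<^sup>2"
proof -
  obtain \<Phi> where [measurable]: "\<Phi> \<in> borel_measurable potential_space"
    and \<Phi>: "\<And>w. (cluster_residual DTR_m1 w)\<^sup>2 = \<Phi> (potentials w)"
    using cluster_residual_sq_potentials by blast
  have int: "integrable M (\<lambda>w. \<Phi> (potentials w))"
    using integrable_cluster_residual_sq by (simp add: \<Phi> flip: \<Phi>)
  have "(\<integral>w. (ipw DTR_m1 w * cluster_residual DTR_m1 w)\<^sup>2 \<partial>M)
      = (\<integral>w. ipw DTR_m1 w ^ Suc 1 * \<Phi> (potentials w) \<partial>M)"
    by (simp add: power2_eq_square mult_ac flip: \<Phi>)
  also have "\<dots> = 2 * (\<integral>w. \<Phi> (potentials w) \<partial>M)"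
    using integral_ipw_DTR_m1_power_mult[OF _ int, of 1] by simp
  finally show ?thesis
    by (simp add: tau2_eq[OF V] \<Phi>)
qed

lemma integral_cluster_residual_sq_exch:
  assumes "covm M (Ypot d) = \<sigma> *\<^sub>R exch \<rho>"
  shows "(\<integral>w. (cluster_residual d w)\<^sup>2 \<partial>M) = \<sigma> * real CARD('m) * (1 + (real CARD('m) - 1) * \<rho>)"
  by (simp add: integral_cluster_residual_sq assms inner_ones_exch_ones)

lemma exch_design_effect_nonneg:
  assumes "covm M (Ypot d) = \<sigma> *\<^sub>R exch \<rho>" and "0 < \<sigma>"
  shows "0 \<le> 1 + (real CARD('m) - 1) * \<rho>"
proof -
  have "0 \<le> (\<integral>w. (cluster_residual d w)\<^sup>2 \<partial>M)"
    by simp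
  moreover have "0 < \<sigma> * real CARD('m)"
    using assms(2) by simp
  ultimately show ?thesis
    by (simp add: integral_cluster_residual_sq_exch[OF assms(1)] zero_le_mult_iff)
qed

lemma tau2_dtr1_le:
  fixes V :: "real^'m^'m"
  assumes b: "b = 1 \<or> b = -1" and V: "pos_def V" "V *v ones = c *\<^sub>R ones"
    and cond: "loewner_le
      (cond_exp_ev M (\<lambda>w. \<not> R w)
         (\<lambda>w. outer (Ypot (dtr1 b) w - \<beta> (dtr1 b) *\<^sub>R ones) (Ypot (dtr1 b) w - \<beta> (dtr1 b) *\<^sub>R ones)))
      (covm M (Ypot (dtr1 b)))"
    and cov: "covm M (Ypot (dtr1 b)) = \<sigma> *\<^sub>R exch \<rho>"
  shows "tau2 M A1 R A2 Y V \<beta> (dtr1 b)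
    \<le> 2 * (2 - prob {w\<in>space M. A1 w = 1 \<and> R w} / prob {w\<in>space M. A1 w = 1}) * \<sigma>
        * (1 + (real CARD('m) - 1) * \<rho>) / real CARD('m)"
proof -
  define m where "m = real CARD('m)"
  define E where "E = (\<integral>w. (cluster_residual (dtr1 b) w)\<^sup>2 \<partial>M)"
  define q where "q = prob {w\<in>space M. \<not> R w}"
  have "0 < m"
    by (simp add: m_def)
  have E: "E = \<sigma> * m * (1 + (m - 1) * \<rho>)"
    unfolding E_def m_def by (rule integral_cluster_residual_sq_exch[OF cov])
  have "tau2 M A1 R A2 Y V \<beta> (dtr1 b)
      = 2 * (E + (\<integral>w. of_bool (\<not> R w) * (cluster_residual (dtr1 b) w)\<^sup>2 \<partial>M)) / m\<^sup>2"
    by (simp add: tau2_dtr1[OF b V] E_def m_def)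
  also have "\<dots> \<le> 2 * (E + q * E) / m\<^sup>2"
    using integral_nonresponder_cluster_residual_sq_le[OF cond] by (simp add: E_def q_def divide_right_mono)
  also have "\<dots> = 2 * (2 - (1 - q)) * \<sigma> * (1 + (m - 1) * \<rho>) / m"
    using \<open>0 < m\<close> by (simp add: E power2_eq_square field_simps)
  finally show ?thesis
    by (simp add: response_rate q_def m_def)
qed

lemma tau2_DTR_m1_exch:
  fixes V :: "real^'m^'m"
  assumes V: "pos_def V" "V *v ones = c *\<^sub>R ones"
    and cov: "covm M (Ypot DTR_m1) = \<sigma> *\<^sub>R exch \<rho>"
  shows "tau2 M A1 R A2 Y V \<beta> DTR_m1 = 2 * \<sigma> * (1 + (real CARD('m) - 1) * \<rho>) / real CARD('m)"
  unfolding tau2_DTR_m1[OF V] integral_cluster_residual_sq_exch[OF cov] by (simp add: power2_eq_square)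

end

section \<open>The sample-size bound\<close>

lemma sample_size_ratio_le:
  fixes Z t1 t2 \<sigma>1 \<sigma>2 p k m \<delta> :: real
  assumes t1: "t1 \<le> 2 * (2 - p) * \<sigma>1 * k / m" and t2: "t2 = 2 * \<sigma>2 * k / m"
    and "p \<le> 1" "\<sigma>1 \<le> \<sigma>2" "0 < \<sigma>1" "0 \<le> k" "0 < m" "0 < \<delta>" "0 \<le> Z"
  shows "Z * (t1 + t2) / (\<delta>\<^sup>2 * ((\<sigma>1 + \<sigma>2) / 2)) \<le> 4 * Z / (m * \<delta>\<^sup>2) * k * (1 + (1 - p) / 2)"
proof -
  have "t1 + t2 \<le> (2 * (2 - p) * \<sigma>1 + 2 * \<sigma>2) * k / m"
    using t1 t2 by (simp add: add_divide_distrib distrib_right)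
  also have "\<dots> \<le> (3 - p) * (\<sigma>1 + \<sigma>2) * k / m"
  proof (intro divide_right_mono mult_right_mono)
    show "2 * (2 - p) * \<sigma>1 + 2 * \<sigma>2 \<le> (3 - p) * (\<sigma>1 + \<sigma>2)"
      using mult_left_mono[of \<sigma>1 \<sigma>2 "1 - p"] assms by (simp add: algebra_simps)
  qed (use assms in auto)
  finally have "Z * (t1 + t2) / (\<delta>\<^sup>2 * ((\<sigma>1 + \<sigma>2) / 2))
      \<le> Z * ((3 - p) * (\<sigma>1 + \<sigma>2) * k / m) / (\<delta>\<^sup>2 * ((\<sigma>1 + \<sigma>2) / 2))"
    using assms by (intro divide_right_mono mult_left_mono) auto
  also have "\<dots> = 4 * Z / (m * \<delta>\<^sup>2) * k * (1 + (1 - p) / 2)"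
  proof -
    have "Z * ((3 - p) * S * k / m) / (\<delta>\<^sup>2 * (S / 2)) = 4 * Z / (m * \<delta>\<^sup>2) * k * (1 + (1 - p) / 2)"
      if "S \<noteq> 0" for S
      using that \<open>0 < m\<close> \<open>0 < \<delta>\<close> by (simp add: field_simps power2_eq_square)
    moreover have "\<sigma>1 + \<sigma>2 \<noteq> 0"
      using assms by simp
    ultimately show ?thesis
      by blast
  qed
  finally show ?thesis .
qed

theorem mainTheorem4:
  fixes M :: "'w measure"
    and A1 A2 :: "'w \<Rightarrow> real" and R :: "'w \<Rightarrow> bool"
    and Ypot :: "dtr \<Rightarrow> 'w \<Rightarrow> real^'m" and Y :: "'w \<Rightarrow> real^'m"
    and \<beta> :: "dtr \<Rightarrow> real" and s r b2 p1 :: real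
    and \<sigma>sq1 \<sigma>sqm \<rho>1 \<rho>m :: real
  assumes P: "prob_space M"
    \<comment> \<open>measurability and finite second moments\<close>
    and meas_A1: "A1 \<in> borel_measurable M" and meas_A2: "A2 \<in> borel_measurable M"
    and meas_R: "R \<in> measurable M (count_space UNIV)"
    and meas_Y: "Y \<in> borel_measurable M"
    and meas_Ypot: "\<And>d. Ypot d \<in> borel_measurable M"
    and sq_int: "\<And>d j. integrable M (\<lambda>w. (Ypot d w $ j)\<^sup>2)"
    \<comment> \<open>randomization: A1 and A2 are fair coins in {1,-1}, independent of each other
        and of the response / potential outcomes\<close>
    and A1_vals: "\<And>w. A1 w = 1 \<or> A1 w = -1"
    and A2_vals: "\<And>w. A2 w = 1 \<or> A2 w = -1"
    and A1_prob: "measure M {w\<in>space M. A1 w = 1} = 1/2"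
    and A2_prob: "measure M {w\<in>space M. A2 w = 1} = 1/2"
    and indep1: "prob_space.indep_set M (sets (vimage_algebra (space M) A1 borel))
         (sets (vimage_algebra (space M)
         (\<lambda>w. (A2 w, R w, Ypot DTR_1_1 w, Ypot DTR_1_m1 w, Ypot DTR_m1 w)) (borel \<Otimes>\<^sub>M count_space UNIV \<Otimes>\<^sub>M borel \<Otimes>\<^sub>M borel \<Otimes>\<^sub>M borel)))"
    and indep2: "prob_space.indep_set M (sets (vimage_algebra (space M) A2 borel))
         (sets (vimage_algebra (space M)
         (\<lambda>w. (R w, Ypot DTR_1_1 w, Ypot DTR_1_m1 w, Ypot DTR_m1 w)) (count_space UNIV \<Otimes>\<^sub>M borel \<Otimes>\<^sub>M borel \<Otimes>\<^sub>M borel)))"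
    \<comment> \<open>p1 = Pr(R = 1 | A1 = 1)\<close>
    and p1_def: "p1 = measure M {w\<in>space M. A1 w = 1 \<and> R w} / measure M {w\<in>space M. A1 w = 1}"
    \<comment> \<open>cell-mean model: E_d(Y_ij) = beta_d for all j\<close>
    and mean_model: "\<And>d j. (\<integral>w. Ypot d w $ j \<partial>M) = \<beta> d"
    \<comment> \<open>working covariance V = s^2 Exch_m(r), positive definite\<close>
    and V_pd: "pos_def ((s\<^sup>2) *\<^sub>R (exch r :: real^'m^'m))"
    and b2_vals: "b2 = 1 \<or> b2 = -1"
    \<comment> \<open>(a) consistency of potential outcomes\<close>
    and consistency: "\<And>d w. consist A1 R A2 d w = 1 \<Longrightarrow> Y w = Ypot d w"
    \<comment> \<open>(b)\<close>
    and cond_b: "loewner_le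
         (cond_exp_ev M (\<lambda>w. \<not> R w)
            (\<lambda>w. outer (Ypot (dtr1 b2) w - \<beta> (dtr1 b2) *\<^sub>R ones) (Ypot (dtr1 b2) w - \<beta> (dtr1 b2) *\<^sub>R ones)))
         (covm M (Ypot (dtr1 b2)))"
    \<comment> \<open>(c)\<close>
    and cov1: "covm M (Ypot (dtr1 b2)) = \<sigma>sq1 *\<^sub>R exch \<rho>1"
    and covm: "covm M (Ypot DTR_m1) = \<sigma>sqm *\<^sub>R exch \<rho>m"
    and \<sigma>pos: "0 < \<sigma>sq1" "0 < \<sigma>sqm"
  shows "tau2 M A1 R A2 Y (s\<^sup>2 *\<^sub>R exch r) \<beta> (dtr1 b2)
           \<le> 2 * (2 - p1) * \<sigma>sq1 * (1 + (real CARD('m) - 1) * \<rho>1) / real CARD('m)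
       \<and> tau2 M A1 R A2 Y (s\<^sup>2 *\<^sub>R exch r) \<beta> DTR_m1
           = 2 * \<sigma>sqm * (1 + (real CARD('m) - 1) * \<rho>m) / real CARD('m)
       \<and> (\<forall>\<rho>. \<rho>1 = \<rho> \<and> \<rho>m = \<rho> \<and> \<sigma>sq1 \<le> \<sigma>sqm \<longrightarrow>
           (\<forall>\<delta> \<alpha> \<beta>'. 0 < \<delta> \<and> 0 < \<alpha> \<and> \<alpha> < 1 \<and> 0 < \<beta>' \<and> \<beta>' < 1 \<longrightarrow>
              (z_upper \<beta>' + z_upper (\<alpha>/2))\<^sup>2
                * (tau2 M A1 R A2 Y (s\<^sup>2 *\<^sub>R exch r) \<beta> (dtr1 b2)
                   + tau2 M A1 R A2 Y (s\<^sup>2 *\<^sub>R exch r) \<beta> DTR_m1)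
                / (\<delta>\<^sup>2 * ((\<sigma>sq1 + \<sigma>sqm) / 2))
              \<le> 4 * (z_upper \<beta>' + z_upper (\<alpha>/2))\<^sup>2 / (real CARD('m) * \<delta>\<^sup>2)
                 * (1 + (real CARD('m) - 1) * \<rho>) * (1 + (1 - p1) / 2)))"
proof -
  interpret adept_smart M A1 A2 R Ypot Y \<beta>
    by (intro adept_smart.intro adept_smart_axioms.intro P) (fact assms)+
  let ?m = "real CARD('m)"
  have V: "(s\<^sup>2 *\<^sub>R exch r :: real^'m^'m) *v ones = (s\<^sup>2 * (1 + (?m - 1) * r)) *\<^sub>R ones"
    by (simp add: exch_mult_ones flip: scaleR_matrix_vector_assoc)
  have tau1: "tau2 M A1 R A2 Y (s\<^sup>2 *\<^sub>R exch r) \<beta> (dtr1 b2) \<le> 2 * (2 - p1) * \<sigma>sq1 * (1 + (?m - 1) * \<rho>1) / ?m"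
    using tau2_dtr1_le[OF b2_vals V_pd V cond_b cov1] by (simp add: p1_def)
  have tau_m: "tau2 M A1 R A2 Y (s\<^sup>2 *\<^sub>R exch r) \<beta> DTR_m1 = 2 * \<sigma>sqm * (1 + (?m - 1) * \<rho>m) / ?m"
    by (rule tau2_DTR_m1_exch[OF V_pd V covm])
  have "p1 \<le> 1"
    using response_rate by (simp add: p1_def)
  have "0 \<le> 1 + (?m - 1) * \<rho>m"
    by (rule exch_design_effect_nonneg[OF covm \<sigma>pos(2)])
  show ?thesis
    by (intro conjI allI impI tau1 tau_m sample_size_ratio_le)
       (use tau1 tau_m \<open>p1 \<le> 1\<close> \<open>0 \<le> 1 + (?m - 1) * \<rho>m\<close> \<sigma>pos in auto)
qed

end
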